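(* For positive integers $n$ and $k$, $C_{-2n}^{(2k-1)}$ equals the number of integer sequences $a_1\le a_2\ge a_3\le a_4\ge\cdots\ge a_{2n-1}$ with $1\le a_i\le k$ for all $i$.
   Context: For $N\ge0$, $C_N^{(K)}$ is the number of lattice paths with steps $(1,1),(1,-1)$ from $(0,0)$ to $(N,0)$ never going below the $x$-axis nor above $y=K$. For odd $K$ the generating function $F(x)=\sum_{N\ge0}C_N^{(K)}x^N$ is a rational function $p/q$ with $\deg p<\deg q$, $q(0)\neq0$; values at negative indices are defined by extending the linear recurrence backwards, equivalently $\sum_{N\ge1}C_{-N}^{(K)}x^N=-F(1/x)$. *)

theory Defs
  imports "HOL-Computational_Algebra.Polynomial"
begin

text \<open>Lattice paths from (0,0) to (N,0) with steps (1,1),(1,-1), staying in 0..K,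
  encoded as their list of vertical steps.\<close>
definition bounded_dyck_paths :: "nat \<Rightarrow> nat \<Rightarrow> int list set" where
  "bounded_dyck_paths K N = {s. length s = N \<and> set s \<subseteq> {-1, 1} \<and> sum_list s = 0 \<and>
      (\<forall>i\<le>N. 0 \<le> sum_list (take i s) \<and> sum_list (take i s) \<le> int K)}"

definition C_nonneg :: "nat \<Rightarrow> nat \<Rightarrow> nat" where
  "C_nonneg K N = card (bounded_dyck_paths K N)"

definition satisfies_rec :: "rat poly \<Rightarrow> (int \<Rightarrow> rat) \<Rightarrow> bool" where
  "satisfies_rec q c \<longleftrightarrow> (\<forall>N::int. (\<Sum>j\<le>degree q. coeff q j * c (N - int j)) = 0)"

text \<open>The extension of C^(K) to all integers: the unique two-sided sequence agreeing
  with the path counts for N >= 0 and satisfying, for all integers, a linear recurrence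
  whose denominator polynomial q has q(0) \<noteq> 0 (equivalently F = p/q with deg p < deg q).\<close>
definition C_ext :: "nat \<Rightarrow> int \<Rightarrow> rat" where
  "C_ext K = (THE c. (\<forall>N::nat. c (int N) = of_nat (C_nonneg K N)) \<and>
                     (\<exists>q. coeff q 0 \<noteq> 0 \<and> satisfies_rec q c))"

definition alt_seqs :: "nat \<Rightarrow> nat \<Rightarrow> int list set" where
  "alt_seqs m k = {a. length a = m \<and> set a \<subseteq> {1..int k} \<and>
      (\<forall>i. i + 1 < m \<longrightarrow> (if even i then a ! i \<le> a ! (i+1) else a ! i \<ge> a ! (i+1)))}"

end

theory Submission
  imports Defs
begin

text \<open>Let T be the adjacency operator of the path on the 2k heights 0, ..., 2k - 1, so that
  C_N = (T^N delta0)_0. Every two-sided orbit of T satisfies the recurrence given by its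
  characteristic polynomial U_2k(x/2), whose reversal has constant term 1; hence C_ext is read off
  at height 0 of the two-sided orbit of delta0. Its backward part is explicit: the nonzero
  coordinates of T^(-2n) delta0 are, up to sign, the numbers of alternating sequences of length
  2n - 1 with first entry at most b, and those of T^(-2n-1) delta0 are partial sums of these over b.
  That T maps each of these vectors onto the previous one amounts to splitting alternating
  sequences by their first two entries.\<close>

lemma satisfies_rec_eventually_zero:
  assumes "q \<noteq> 0" and rec: "satisfies_rec q e" and zero: "\<And>N. N \<ge> N0 \<Longrightarrow> e N = 0"
  shows "e M = 0"
proof -
  define D where "D = degree q"
  have lc: "coeff q D \<noteq> 0" using \<open>q \<noteq> 0\<close> unfolding D_def by simp
  have "\<forall>M. M \<ge> N0 - int t \<longrightarrow> e M = 0" for t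
  proof (induction t)
    case 0 then show ?case using zero by simp
  next
    case (Suc t)
    show ?case
    proof (intro allI impI)
      fix M assume M: "N0 - int (Suc t) \<le> M"
      show "e M = 0"
      proof (cases "M \<ge> N0 - int t")
        case True then show ?thesis using Suc by blast
      next
        case False
        have "(\<Sum>j\<le>D. coeff q j * e (M + int D - int j)) = 0"
          using rec unfolding satisfies_rec_def D_def by (metis (no_types))
        moreover have "(\<Sum>j\<le>D. coeff q j * e (M + int D - int j))
              = coeff q D * e M + (\<Sum>j<D. coeff q j * e (M + int D - int j))"
          by (simp add: lessThan_Suc_atMost[symmetric] del: lessThan_Suc_atMost)
        moreover have "(\<Sum>j<D. coeff q j * e (M + int D - int j)) = 0"
          using Suc False M by (intro sum.neutral) auto
        ultimately show ?thesis using lc by simp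
      qed
    qed
  qed
  moreover have "M \<ge> N0 - int (nat (N0 - M))" by simp
  ultimately show ?thesis by blast
qed

lemma satisfies_rec_filter:
  assumes "satisfies_rec q c"
  shows "satisfies_rec q (\<lambda>N. \<Sum>j\<le>degree p. coeff p j * c (N - int j))"
  unfolding satisfies_rec_def
proof
  fix N :: int
  have "(\<Sum>i\<le>degree q. coeff q i * (\<Sum>j\<le>degree p. coeff p j * c (N - int i - int j)))
     = (\<Sum>j\<le>degree p. coeff p j * (\<Sum>i\<le>degree q. coeff q i * c (N - int j - int i)))"
    by (simp add: sum_distrib_left sum.swap[of _ "{..degree q}"] algebra_simps)
  also have "\<dots> = 0" using assms unfolding satisfies_rec_def by simp
  finally show "(\<Sum>i\<le>degree q. coeff q i * (\<Sum>j\<le>degree p. coeff p j * c (N - int i - int j))) = 0" .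
qed

text \<open>Filtering c1 by q2 gives a sequence annihilated by q1 and vanishing at large indices,
  hence zero; so c1 - c2 is annihilated by q2 and vanishes on the naturals.\<close>
lemma satisfies_rec_unique:
  assumes "q1 \<noteq> 0" "satisfies_rec q1 c1" and "q2 \<noteq> 0" "satisfies_rec q2 c2"
      and eq: "\<And>N::nat. c1 (int N) = c2 (int N)"
  shows "c1 = c2"
proof -
  define e where "e = (\<lambda>N. \<Sum>j\<le>degree q2. coeff q2 j * c1 (N - int j))"
  have e_eq: "e N = (\<Sum>j\<le>degree q2. coeff q2 j * c2 (N - int j))" if "N \<ge> int (degree q2)" for N
    unfolding e_def
  proof (intro sum.cong refl)
    fix j assume "j \<in> {..degree q2}"
    then have "N - int j = int (nat (N - int j))" using that by auto
    then show "coeff q2 j * c1 (N - int j) = coeff q2 j * c2 (N - int j)" using eq by metis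
  qed
  have "e N = 0" if "N \<ge> int (degree q2)" for N
    using e_eq[OF that] \<open>satisfies_rec q2 c2\<close> unfolding satisfies_rec_def by simp
  then have e0: "e M = 0" for M
    using satisfies_rec_eventually_zero[OF \<open>q1 \<noteq> 0\<close> satisfies_rec_filter[OF \<open>satisfies_rec q1 c1\<close>]]
    unfolding e_def by blast
  have "satisfies_rec q2 (\<lambda>N. c1 N - c2 N)"
    using e0 \<open>satisfies_rec q2 c2\<close>
    by (simp add: satisfies_rec_def e_def right_diff_distrib sum_subtractf)
  moreover have "c1 N - c2 N = 0" if "N \<ge> 0" for N
    using eq[of "nat N"] that by simp
  ultimately have "c1 M - c2 M = 0" for M
    using satisfies_rec_eventually_zero[OF \<open>q2 \<noteq> 0\<close>] by blast
  then show ?thesis by auto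
qed

lemma C_ext_eqI:
  assumes "\<And>N. c (int N) = of_nat (C_nonneg K N)" and "coeff q 0 \<noteq> 0" and "satisfies_rec q c"
  shows "C_ext K = c"
  unfolding C_ext_def
proof (rule the_equality)
  fix c'
  assume "(\<forall>N. c' (int N) = of_nat (C_nonneg K N)) \<and> (\<exists>q. coeff q 0 \<noteq> 0 \<and> satisfies_rec q c')"
  then obtain q' where "coeff q' 0 \<noteq> 0" "satisfies_rec q' c'" "\<And>N. c' (int N) = c (int N)"
    using assms(1) by auto
  then show "c' = c"
    using assms(2,3) by (intro satisfies_rec_unique) auto
qed (use assms in blast)

lemma satisfies_rec_reflect_poly:
  "satisfies_rec (reflect_poly p) c \<longleftrightarrow> (\<forall>N. (\<Sum>l\<le>degree p. coeff p l * c (N + int l)) = 0)"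
proof -
  define d where "d = degree p"
  have shift: "(\<Sum>j\<le>degree (reflect_poly p). coeff (reflect_poly p) j * c (N - int j))
      = (\<Sum>l\<le>d. coeff p l * c (N - int d + int l))" for N
  proof -
    have "(\<Sum>j\<le>degree (reflect_poly p). coeff (reflect_poly p) j * c (N - int j))
        = (\<Sum>j\<le>d. coeff (reflect_poly p) j * c (N - int j))"
      using degree_reflect_poly_le[of p] unfolding d_def
      by (intro sum.mono_neutral_left) (auto simp: coeff_eq_0)
    also have "\<dots> = (\<Sum>j\<in>{0..d}. coeff p (d - j) * c (N - int j))"
      unfolding d_def atLeast0AtMost by (intro sum.cong) (auto simp: coeff_reflect_poly)
    also have "\<dots> = (\<Sum>l\<in>{0..d}. coeff p (d - (d + 0 - l)) * c (N - int (d + 0 - l)))"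
      by (rule sum.atLeastAtMost_rev)
    also have "\<dots> = (\<Sum>l\<le>d. coeff p l * c (N - int d + int l))"
      unfolding atLeast0AtMost by (intro sum.cong) (auto simp: of_nat_diff algebra_simps)
    finally show ?thesis .
  qed
  show ?thesis
    unfolding satisfies_rec_def shift d_def[symmetric]
  proof (intro iffI allI)
    fix N assume "\<forall>N. (\<Sum>l\<le>d. coeff p l * c (N - int d + int l)) = 0"
    then show "(\<Sum>l\<le>d. coeff p l * c (N + int l)) = 0"
      by (metis add_diff_cancel_right')
  qed simp
qed

text \<open>path_charpoly t is U_t(x/2), the characteristic polynomial of the path with t vertices.\<close>
fun path_charpoly :: "nat \<Rightarrow> rat poly" where
  "path_charpoly 0 = 1"
| "path_charpoly (Suc 0) = [:0, 1:]"
| "path_charpoly (Suc (Suc t)) = pCons 0 (path_charpoly (Suc t)) - path_charpoly t"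

lemma degree_path_charpoly_le_and_coeff: "degree (path_charpoly t) \<le> t \<and> coeff (path_charpoly t) t = 1"
proof (induction t rule: path_charpoly.induct)
  case (3 t)
  have "coeff (path_charpoly t) (Suc (Suc t)) = 0" using 3 by (intro coeff_eq_0) auto
  moreover have "degree (path_charpoly (Suc (Suc t))) \<le> Suc (Suc t)"
    using 3 by (simp add: degree_diff_le)
  ultimately show ?case using 3 by simp
qed simp_all

lemma degree_path_charpoly [simp]: "degree (path_charpoly t) = t"
  using degree_path_charpoly_le_and_coeff[of t] by (metis le_antisym le_degree zero_neq_one)

lemma lead_coeff_path_charpoly [simp]: "coeff (path_charpoly t) t = 1"
  using degree_path_charpoly_le_and_coeff by blast

definition transfer :: "nat \<Rightarrow> (nat \<Rightarrow> rat) \<Rightarrow> nat \<Rightarrow> rat" where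
  "transfer m v i = (if i < m then (if i = 0 then 0 else v (i - 1)) + v (Suc i) else 0)"

definition delta0 :: "nat \<Rightarrow> rat" where
  "delta0 i = of_bool (i = 0)"

definition bounded_paths :: "nat \<Rightarrow> nat \<Rightarrow> int \<Rightarrow> int list set" where
  "bounded_paths K N i = {s. length s = N \<and> set s \<subseteq> {-1, 1} \<and> i + sum_list s = 0 \<and>
      (\<forall>j\<le>N. 0 \<le> i + sum_list (take j s) \<and> i + sum_list (take j s) \<le> int K)}"

lemma bounded_dyck_paths_eq: "bounded_dyck_paths K N = bounded_paths K N 0"
  unfolding bounded_dyck_paths_def bounded_paths_def by simp

lemma finite_bounded_paths: "finite (bounded_paths K N i)"
proof (rule finite_subset)
  show "bounded_paths K N i \<subseteq> {xs. set xs \<subseteq> {-1,1} \<and> length xs = N}"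
    unfolding bounded_paths_def by auto
qed (rule finite_lists_length_eq, simp)

lemma bounded_paths_out_of_range: "i < 0 \<or> i > int K \<Longrightarrow> bounded_paths K N i = {}"
  unfolding bounded_paths_def by force

lemma bounded_paths_0: "bounded_paths K 0 i = (if i = 0 then {[]} else {})"
  unfolding bounded_paths_def by auto

lemma bounded_paths_Suc:
  assumes "0 \<le> i" "i \<le> int K"
  shows "bounded_paths K (Suc N) i = Cons (-1) ` bounded_paths K N (i - 1) \<union> Cons 1 ` bounded_paths K N (i + 1)"
proof -
  have split: "(\<forall>j\<le>Suc N. P j) = (P 0 \<and> (\<forall>j\<le>N. P (Suc j)))" for P
    by (metis Suc_le_mono le0 not0_implies_Suc)
  have "s \<in> bounded_paths K (Suc N) i \<longleftrightarrow>
        (\<exists>x s'. s = x # s' \<and> x \<in> {-1, 1} \<and> s' \<in> bounded_paths K N (i + x))" for s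
    using assms by (cases s) (auto simp: bounded_paths_def split add.assoc)
  then show ?thesis by (auto simp: image_iff)
qed

lemma transfer_power_delta0:
  "(transfer (Suc K) ^^ N) delta0 i = of_nat (card (bounded_paths K N (int i)))"
proof (induction N arbitrary: i)
  case 0 then show ?case by (simp add: delta0_def bounded_paths_0)
next
  case (Suc N)
  show ?case
  proof (cases "i \<le> K")
    case False
    then show ?thesis by (simp add: transfer_def bounded_paths_out_of_range)
  next
    case True
    have "bounded_paths K (Suc N) (int i)
        = Cons (-1) ` bounded_paths K N (int i - 1) \<union> Cons 1 ` bounded_paths K N (int i + 1)"
      using True by (intro bounded_paths_Suc) auto
    then have "card (bounded_paths K (Suc N) (int i))
        = card (bounded_paths K N (int i - 1)) + card (bounded_paths K N (int i + 1))"
      by (simp, subst card_Un_disjoint) (auto simp: finite_bounded_paths card_image)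
    moreover have "(if i = 0 then 0 else (transfer (Suc K) ^^ N) delta0 (i - 1))
        = of_nat (card (bounded_paths K N (int i - 1)))"
      using Suc.IH[of "i - 1"] by (auto simp: bounded_paths_out_of_range of_nat_diff)
    moreover have "(transfer (Suc K) ^^ Suc N) delta0 i
        = (if i = 0 then 0 else (transfer (Suc K) ^^ N) delta0 (i - 1)) + (transfer (Suc K) ^^ N) delta0 (Suc i)"
      using True by (simp add: transfer_def[of "Suc K" "(transfer (Suc K) ^^ N) delta0"])
    ultimately show ?thesis
      using Suc.IH[of "Suc i"] by (simp add: add.commute)
  qed
qed

lemma path_charpoly_transfer_orbit:
  assumes step: "\<And>N. v (N + 1) = transfer m (v N)" and "t \<le> m"
  shows "(\<Sum>l\<le>t. coeff (path_charpoly t) l * v (N + int l) 0) = v N t"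
  using \<open>t \<le> m\<close>
proof (induction t arbitrary: N rule: path_charpoly.induct)
  case 2
  then show ?case using step[of N] by (simp add: transfer_def add.commute)
next
  case (3 t)
  have shifted: "(\<Sum>l\<le>Suc (Suc t). coeff (pCons 0 (path_charpoly (Suc t))) l * v (N + int l) 0)
      = (\<Sum>l\<le>Suc t. coeff (path_charpoly (Suc t)) l * v (N + 1 + int l) 0)"
    by (subst sum.atMost_Suc_shift) (simp add: add_ac)
  have truncated: "(\<Sum>l\<le>Suc (Suc t). coeff (path_charpoly t) l * v (N + int l) 0)
      = (\<Sum>l\<le>t. coeff (path_charpoly t) l * v (N + int l) 0)"
    by (simp add: coeff_eq_0)
  have "(\<Sum>l\<le>Suc (Suc t). coeff (path_charpoly (Suc (Suc t))) l * v (N + int l) 0)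
      = (\<Sum>l\<le>Suc t. coeff (path_charpoly (Suc t)) l * v (N + 1 + int l) 0)
        - (\<Sum>l\<le>t. coeff (path_charpoly t) l * v (N + int l) 0)"
    unfolding shifted[symmetric] truncated[symmetric]
    by (simp add: left_diff_distrib sum_subtractf)
  also have "\<dots> = v (N + 1) (Suc t) - v N t"
    using "3.IH"(1)[of "N + 1"] "3.IH"(2)[of N] "3.prems" by simp
  also have "\<dots> = v N (Suc (Suc t))"
    using step[of N] 3(3) by (simp add: transfer_def)
  finally show ?case .
qed simp

lemma transfer_orbit_satisfies_rec:
  assumes step: "\<And>N. v (N + 1) = transfer m (v N)"
  shows "satisfies_rec (reflect_poly (path_charpoly m)) (\<lambda>N. v N 0)"
  unfolding satisfies_rec_reflect_poly degree_path_charpoly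
proof
  fix N
  have "v (N + int l) = v (N + int l - 1 + 1)" for l by simp
  then have "v N m = 0" using step[of "N - 1"] by (simp add: transfer_def)
  then show "(\<Sum>l\<le>m. coeff (path_charpoly m) l * v (N + int l) 0) = 0"
    using path_charpoly_transfer_orbit[of v m, OF step, of m N] by simp
qed

lemma finite_alt_seqs: "finite (alt_seqs L k)"
proof (rule finite_subset)
  show "alt_seqs L k \<subseteq> {xs. set xs \<subseteq> {1..int k} \<and> length xs = L}"
    unfolding alt_seqs_def by auto
qed (rule finite_lists_length_eq, simp)

lemma alt_seqs_Suc_0: "alt_seqs (Suc 0) k = (\<lambda>x. [x]) ` {1..int k}"
  unfolding alt_seqs_def by (auto simp: length_Suc_conv)

lemma Cons_Cons_in_alt_seqs_iff:
  "x # y # r \<in> alt_seqs (Suc (Suc L)) k \<longleftrightarrow>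
     x \<in> {1..int k} \<and> y \<in> {1..int k} \<and> x \<le> y \<and> (L > 0 \<longrightarrow> r ! 0 \<le> y) \<and> r \<in> alt_seqs L k"
proof -
  have split: "(\<forall>i. P i) = (P 0 \<and> P (Suc 0) \<and> (\<forall>j. P (Suc (Suc j))))" for P :: "nat \<Rightarrow> bool"
    by (metis not0_implies_Suc)
  show ?thesis
    unfolding alt_seqs_def by (subst split) auto
qed

lemma hd_alt_seqs_range: "a \<in> alt_seqs (Suc L) k \<Longrightarrow> a ! 0 \<in> {1..int k}"
  unfolding alt_seqs_def by (auto simp: nth_mem subset_iff)

text \<open>The value at n = 0 is chosen so that alt_count_diff also holds for n = 0.\<close>
definition alt_count :: "nat \<Rightarrow> nat \<Rightarrow> int \<Rightarrow> rat" where
  "alt_count k n b = (if n = 0 then of_bool (b \<ge> int k)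
      else of_nat (card {a \<in> alt_seqs (2 * n - 1) k. a ! 0 \<le> b}))"

lemma alt_count_Suc_0: "alt_count k (Suc n) 0 = 0"
proof -
  have "{a \<in> alt_seqs (Suc (2 * n)) k. a ! 0 \<le> 0} = {}"
    using hd_alt_seqs_range[of _ "2 * n" k] by fastforce
  then show ?thesis unfolding alt_count_def by (simp del: Collect_empty_eq)
qed

lemma alt_count_full: "alt_count k (Suc n) (int k) = of_nat (card (alt_seqs (Suc (2 * n)) k))"
proof -
  have "{a \<in> alt_seqs (Suc (2 * n)) k. a ! 0 \<le> int k} = alt_seqs (Suc (2 * n)) k"
    using hd_alt_seqs_range[of _ "2 * n" k] by auto
  then show ?thesis unfolding alt_count_def by simp
qed

lemma alt_seqs_hd_eq_UN:
  assumes "1 \<le> b"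
  shows "{a \<in> alt_seqs (Suc (Suc (Suc L))) k. a ! 0 = b}
       = (\<Union>c\<in>{b..int k}. (\<lambda>r. b # c # r) ` {r \<in> alt_seqs (Suc L) k. r ! 0 \<le> c})"
proof (intro equalityI subsetI)
  fix a assume a: "a \<in> {a \<in> alt_seqs (Suc (Suc (Suc L))) k. a ! 0 = b}"
  then have "length a = Suc (Suc (Suc L))" unfolding alt_seqs_def by simp
  then obtain x y r where "a = x # y # r" by (metis length_Suc_conv)
  then show "a \<in> (\<Union>c\<in>{b..int k}. (\<lambda>r. b # c # r) ` {r \<in> alt_seqs (Suc L) k. r ! 0 \<le> c})"
    using a Cons_Cons_in_alt_seqs_iff[of x y r "Suc L" k] by auto
qed (use assms in \<open>auto simp: Cons_Cons_in_alt_seqs_iff\<close>)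

lemma card_alt_seqs_hd_eq:
  assumes "1 \<le> b" "b \<le> int k"
  shows "of_nat (card {a \<in> alt_seqs (Suc (2 * n)) k. a ! 0 = b}) = (\<Sum>c\<in>{b..int k}. alt_count k n c)"
proof (cases n)
  case 0
  have "(\<Sum>c\<in>{b..int k}. alt_count k 0 c) = (\<Sum>c\<in>{int k}. alt_count k 0 c)"
    by (rule sum.mono_neutral_right) (use assms in \<open>auto simp: alt_count_def\<close>)
  moreover have "{a \<in> alt_seqs (Suc 0) k. a ! 0 = b} = {[b]}"
    using assms by (auto simp: alt_seqs_Suc_0)
  ultimately show ?thesis using 0 by (simp add: alt_count_def)
next
  case (Suc m)
  let ?F = "\<lambda>c. (\<lambda>r. b # c # r) ` {r \<in> alt_seqs (Suc (2 * m)) k. r ! 0 \<le> c}"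
  have "card {a \<in> alt_seqs (Suc (2 * n)) k. a ! 0 = b} = card (\<Union>c\<in>{b..int k}. ?F c)"
    using alt_seqs_hd_eq_UN[OF assms(1), of "2 * m" k] Suc by simp
  also have "\<dots> = (\<Sum>c\<in>{b..int k}. card (?F c))"
    by (rule card_UN_disjoint) (auto simp: finite_alt_seqs)
  also have "\<dots> = (\<Sum>c\<in>{b..int k}. card {r \<in> alt_seqs (Suc (2 * m)) k. r ! 0 \<le> c})"
    by (intro sum.cong refl card_image) (auto simp: inj_on_def)
  finally show ?thesis using Suc by (simp add: alt_count_def)
qed

lemma alt_count_diff:
  assumes "1 \<le> b" "b \<le> int k"
  shows "alt_count k (Suc n) b - alt_count k (Suc n) (b - 1) = (\<Sum>c\<in>{b..int k}. alt_count k n c)"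
proof -
  let ?A = "\<lambda>c. {a \<in> alt_seqs (Suc (2 * n)) k. a ! 0 \<le> c}"
  have "?A b = ?A (b - 1) \<union> {a \<in> alt_seqs (Suc (2 * n)) k. a ! 0 = b}" by auto
  then have "card (?A b) = card (?A (b - 1)) + card {a \<in> alt_seqs (Suc (2 * n)) k. a ! 0 = b}"
    by (simp, subst card_Un_disjoint) (auto simp: finite_alt_seqs)
  then show ?thesis
    using card_alt_seqs_hd_eq[OF assms, of n] by (simp add: alt_count_def)
qed

definition alt_count_upto :: "nat \<Rightarrow> nat \<Rightarrow> nat \<Rightarrow> rat" where
  "alt_count_upto k n r = (\<Sum>c\<in>{int k - int r..int k}. alt_count k n c)"

lemma alt_count_upto_Suc:
  "alt_count_upto k n (Suc r) = alt_count k n (int k - int (Suc r)) + alt_count_upto k n r"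
proof -
  have "{int k - int (Suc r)..int k} = insert (int k - int (Suc r)) {int k - int r..int k}" by auto
  then show ?thesis unfolding alt_count_upto_def by simp
qed

text \<open>For T = transfer (2 * k), these are T^(-2n) delta0 and T^(-2n-1) delta0.\<close>
definition back_even :: "nat \<Rightarrow> nat \<Rightarrow> nat \<Rightarrow> rat" where
  "back_even k n i = (if even i \<and> i < 2 * k
      then (-1) ^ (i div 2) * alt_count k n (int k - int (i div 2)) else 0)"

definition back_odd :: "nat \<Rightarrow> nat \<Rightarrow> nat \<Rightarrow> rat" where
  "back_odd k n i = (if odd i \<and> i < 2 * k then (-1) ^ (i div 2) * alt_count_upto k n (i div 2) else 0)"

lemma transfer_back_odd: "transfer (2 * k) (back_odd k n) = back_even k n"
proof
  fix i
  show "transfer (2 * k) (back_odd k n) i = back_even k n i"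
  proof (cases "i < 2 * k")
    case lt: True
    show ?thesis
    proof (cases "even i")
      case True
      then obtain r where i: "i = 2 * r" by blast
      show ?thesis
      proof (cases r)
        case 0
        then show ?thesis
          using i lt by (simp add: transfer_def back_odd_def back_even_def alt_count_upto_def)
      next
        case (Suc r')
        have "Suc i < 2 * k" using i lt by presburger
        then have "transfer (2 * k) (back_odd k n) i
            = (-1) ^ r' * alt_count_upto k n r' + (-1) ^ Suc r' * alt_count_upto k n (Suc r')"
          using i Suc lt by (simp add: transfer_def back_odd_def)
        also have "\<dots> = (-1) ^ Suc r' * alt_count k n (int k - int (Suc r'))"
          by (simp add: alt_count_upto_Suc algebra_simps)
        finally show ?thesis using i Suc lt by (simp add: transfer_def back_even_def)
      qed
    next
      case False
      then show ?thesis using lt by (simp add: transfer_def back_odd_def back_even_def)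
    qed
  qed (simp add: transfer_def back_even_def)
qed

lemma transfer_back_even_Suc: "transfer (2 * k) (back_even k (Suc n)) = back_odd k n"
proof
  fix i
  show "transfer (2 * k) (back_even k (Suc n)) i = back_odd k n i"
  proof (cases "i < 2 * k")
    case lt: True
    show ?thesis
    proof (cases "even i")
      case True
      then show ?thesis using lt
        by (cases i) (simp_all add: transfer_def back_even_def back_odd_def)
    next
      case False
      then obtain r where i: "i = 2 * r + 1" by (blast elim: oddE)
      have "r < k" using i lt by simp
      have "transfer (2 * k) (back_even k (Suc n)) i
          = (-1) ^ r * alt_count k (Suc n) (int k - int r)
            + (if Suc r < k then (-1) ^ Suc r * alt_count k (Suc n) (int k - int (Suc r)) else 0)"
        using i lt by (simp add: transfer_def back_even_def)
      also have "\<dots> = (-1) ^ r * (alt_count k (Suc n) (int k - int r)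
                                 - alt_count k (Suc n) (int k - int r - 1))"
      proof (cases "Suc r < k")
        case False
        then have "int k - int r - 1 = 0" using \<open>r < k\<close> by simp
        then show ?thesis using False by (simp add: alt_count_Suc_0)
      qed (simp add: algebra_simps)
      also have "\<dots> = (-1) ^ r * alt_count_upto k n r"
        using \<open>r < k\<close> by (subst alt_count_diff) (auto simp: alt_count_upto_def)
      finally show ?thesis using i lt by (simp add: transfer_def back_odd_def)
    qed
  qed (simp add: transfer_def back_odd_def)
qed

lemma back_even_0: "k \<ge> 1 \<Longrightarrow> back_even k 0 = delta0"
  by (auto simp: fun_eq_iff back_even_def delta0_def alt_count_def)

definition backward_orbit :: "nat \<Rightarrow> nat \<Rightarrow> nat \<Rightarrow> rat" where
  "backward_orbit k d = (if even d then back_even k (d div 2) else back_odd k (d div 2))"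

lemma transfer_backward_orbit_Suc:
  "transfer (2 * k) (backward_orbit k (Suc d)) = backward_orbit k d"
proof (cases "even d")
  case True
  then show ?thesis using transfer_back_odd by (simp add: backward_orbit_def)
next
  case False
  then obtain n where "d = 2 * n + 1" by (blast elim: oddE)
  then show ?thesis using transfer_back_even_Suc by (simp add: backward_orbit_def)
qed

definition two_sided_orbit :: "('a \<Rightarrow> 'a) \<Rightarrow> (nat \<Rightarrow> 'a) \<Rightarrow> int \<Rightarrow> 'a" where
  "two_sided_orbit f b N = (if N \<ge> 0 then (f ^^ nat N) (b 0) else b (nat (- N)))"

lemma two_sided_orbit_step:
  assumes "\<And>d. f (b (Suc d)) = b d"
  shows "two_sided_orbit f b (N + 1) = f (two_sided_orbit f b N)"
proof -
  consider "N \<ge> 0" | "N = -1" | "N < -1" by linarith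
  then show ?thesis
  proof cases
    case 1
    then have "nat (N + 1) = Suc (nat N)" by simp
    then show ?thesis using 1 by (simp add: two_sided_orbit_def)
  next
    case 2
    then show ?thesis using assms[of 0] by (simp add: two_sided_orbit_def)
  next
    case 3
    then have "nat (- N) = Suc (nat (- (N + 1)))" by simp
    then show ?thesis using 3 assms by (simp add: two_sided_orbit_def)
  qed
qed

lemma C_ext_odd_eq_two_sided_orbit:
  assumes "k \<ge> 1"
  shows "C_ext (2 * k - 1) = (\<lambda>N. two_sided_orbit (transfer (2 * k)) (backward_orbit k) N 0)"
proof (rule C_ext_eqI)
  have "two_sided_orbit (transfer (2 * k)) (backward_orbit k) (N + 1)
      = transfer (2 * k) (two_sided_orbit (transfer (2 * k)) (backward_orbit k) N)" for N
    using transfer_backward_orbit_Suc by (rule two_sided_orbit_step)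
  then show "satisfies_rec (reflect_poly (path_charpoly (2 * k)))
      (\<lambda>N. two_sided_orbit (transfer (2 * k)) (backward_orbit k) N 0)"
    by (rule transfer_orbit_satisfies_rec)
  show "coeff (reflect_poly (path_charpoly (2 * k))) 0 \<noteq> 0" by simp
  fix N
  have "Suc (2 * k - 1) = 2 * k" using assms by simp
  then show "two_sided_orbit (transfer (2 * k)) (backward_orbit k) (int N) 0 = of_nat (C_nonneg (2 * k - 1) N)"
    using assms transfer_power_delta0[where K = "2 * k - 1" and N = N and i = 0]
    by (simp add: two_sided_orbit_def backward_orbit_def back_even_0 C_nonneg_def bounded_dyck_paths_eq)
qed

theorem corollary13:
  fixes n k :: nat
  assumes "n \<ge> 1" and "k \<ge> 1"
  shows "C_ext (2*k - 1) (- 2 * int n) = of_nat (card (alt_seqs (2*n - 1) k))"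
proof -
  obtain m where n: "n = Suc m" using assms(1) by (cases n) auto
  have "C_ext (2 * k - 1) (- 2 * int n) = backward_orbit k (2 * n) 0"
    unfolding C_ext_odd_eq_two_sided_orbit[OF assms(2)]
    using assms(1) by (simp add: two_sided_orbit_def nat_mult_distrib)
  also have "\<dots> = alt_count k n (int k)"
    using assms(2) by (simp add: backward_orbit_def back_even_def)
  also have "\<dots> = of_nat (card (alt_seqs (2 * n - 1) k))"
    using n alt_count_full by simp
  finally show ?thesis .
qed

end
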